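(* Let $N,d\ge1$, $T>0$, $n\ge 2$, and let $x^n=(x^n_1,\dots,x^n_N)$, $v^n=\dot x^n$ be the solution on $[0,T]$ of the system $\dot x^n_i=v^n_i$, $\dot v^n_i=\frac1N\sum_{k=1}^N(v^n_k-v^n_i)\psi_n(|x^n_i-x^n_k|)$, $i=1,\dots,N$, with initial data $x^n(0),v^n(0)$. Then: 1. $x^n$ is $C^\infty$ in a neighborhood of every time $t$ such that $|x^n_i(t)-x^n_j(t)|>0$ for all $i\ne j$. 2. The average velocity $\frac1N\sum_{i=1}^N v^n_i(t)$ is constant in $t$. 3. There is a constant $M(n)$ with $\|v^n_i\|_{L^\infty([0,T])}\le M(n)$ for all $i$. 4. If the initial data $x^n(0),v^n(0)$ are bounded uniformly in $n$, then there is a constant $M$ independent of $n$ with $\|v^n_i\|_{L^\infty([0,T])}\le M$ for all $i$ and all $n$. 5. $|\dot v^n_i|\le 2M(n)n$. 6. If for some $t$ and some $i,j$ we have $x^n_i(t)=x^n_j(t)$ and $v^n_i(t)=v^n_j(t)$, then $x^n_i\equiv x^n_j$ on $[t,T]$. 7. If at some time $t$ we have $v^n_i(t)=v^n_j(t)$ for all $i,j$, then $v^n$ is constant on $[t,T]$.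
   Context: Let $\alpha\in(0,1)$ and $\psi(s)=s^{-\alpha}$ for $s>0$, $\psi(0)=0$. For each $n$, $\psi_n:[0,\infty)\to[0,\infty)$ is defined by $\psi_n(s)=\psi(s)$ for $s\ge (n-1)^{-1/\alpha}$, $\psi_n(s)=n$ for $s\le n^{-1/\alpha}$, and $\psi_n$ smooth and monotone on $[n^{-1/\alpha},(n-1)^{-1/\alpha}]$. For such smooth bounded weights the system has a unique global classical $C^2$ solution. *)

theory Defs
  imports "HOL-Analysis.Analysis"
begin

definition psi :: "real \<Rightarrow> real \<Rightarrow> real" where
  "psi \<alpha> s = (if s > 0 then s powr (-\<alpha>) else 0)"

text \<open>C-infinity on a set S (derivatives taken within S, so relative neighbourhoods
  at boundary points are allowed).\<close>
definition C_inf_on :: "real set \<Rightarrow> (real \<Rightarrow> 'a::real_normed_vector) \<Rightarrow> bool" where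
  "C_inf_on S f \<longleftrightarrow> (\<exists>D. D 0 = f \<and>
      (\<forall>k. \<forall>t\<in>S. (D k has_vector_derivative D (Suc k) t) (at t within S)))"

definition psi_trunc :: "real \<Rightarrow> nat \<Rightarrow> (real \<Rightarrow> real) \<Rightarrow> bool" where
  "psi_trunc \<alpha> n p \<longleftrightarrow>
     (\<forall>s. real (n - 1) powr (-1/\<alpha>) \<le> s \<longrightarrow> p s = psi \<alpha> s) \<and>
     (\<forall>s. 0 \<le> s \<and> s \<le> real n powr (-1/\<alpha>) \<longrightarrow> p s = real n) \<and>
     (\<forall>s\<ge>0. p s \<ge> 0) \<and>
     C_inf_on {0<..} p \<and>
     (monotone_on {real n powr (-1/\<alpha>) .. real (n - 1) powr (-1/\<alpha>)} (\<le>) (\<le>) p \<or>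
      monotone_on {real n powr (-1/\<alpha>) .. real (n - 1) powr (-1/\<alpha>)} (\<le>) (\<ge>) p)"

definition CS_solution ::
  "nat \<Rightarrow> (real \<Rightarrow> real) \<Rightarrow> real \<Rightarrow> (nat \<Rightarrow> real \<Rightarrow> real^'d) \<Rightarrow> (nat \<Rightarrow> real \<Rightarrow> real^'d) \<Rightarrow> bool"
  where
  "CS_solution N p T x v \<longleftrightarrow>
     (\<forall>i<N. \<forall>t\<in>{0..T}.
        (x i has_vector_derivative v i t) (at t within {0..T}) \<and>
        (v i has_vector_derivative
            ((1 / real N) *\<^sub>R (\<Sum>k<N. p (norm (x i t - x k t)) *\<^sub>R (v k t - v i t))))
          (at t within {0..T}))"

end

(* The truncated weight psi_n is nonnegative, smooth on (0, oo), bounded by n and constant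
   near 0, hence Lipschitz on bounded sets. Antisymmetry of the pairwise interaction conserves
   the momentum sum v_i and makes the kinetic energy E = sum |v_i|^2 nonincreasing, so every
   velocity is bounded by sqrt (E 0), which depends on n only through the initial data; the
   acceleration is then at most 2 sqrt (E 0) n. If all velocities agree at time t, E t is the
   least energy compatible with the conserved momentum, so E cannot drop and the velocities
   stay equal. For two particles in the same state, the force difference is Lipschitz in their
   relative state, so |x_i - x_j|^2 + |v_i - v_j|^2 obeys a linear differential inequality and
   stays 0 by Gronwall. Away from collisions the right-hand side is a smooth function of the
   state (|x_i - x_j| is smooth where it is positive), and bootstrapping C^k regularity through
   the equations gives C^oo. *)

theory Submission
  imports Defs
begin

fun Ck_on :: "nat \<Rightarrow> real set \<Rightarrow> (real \<Rightarrow> 'a::real_normed_vector) \<Rightarrow> bool" where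
  "Ck_on 0 S f = True"
| "Ck_on (Suc k) S f \<longleftrightarrow> (\<exists>f'. (\<forall>t\<in>S. (f has_vector_derivative f' t) (at t within S)) \<and> Ck_on k S f')"

lemma Ck_on_SucD: "Ck_on (Suc k) S f \<Longrightarrow> Ck_on k S f"
  by (induction k arbitrary: f) auto

lemma Ck_on_SucI:
  "(\<And>t. t \<in> S \<Longrightarrow> (f has_vector_derivative f' t) (at t within S)) \<Longrightarrow> Ck_on k S f' \<Longrightarrow> Ck_on (Suc k) S f"
  by auto

lemma Ck_on_cong:
  assumes "Ck_on k S f" "\<And>t. t \<in> S \<Longrightarrow> f t = g t"
  shows "Ck_on k S g"
proof (cases k)
  case (Suc m)
  with assms obtain f' where f': "\<forall>t\<in>S. (f has_vector_derivative f' t) (at t within S)" "Ck_on m S f'"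
    by auto
  have "(g has_vector_derivative f' t) (at t within S)" if "t \<in> S" for t
    using has_vector_derivative_transform_within[OF f'(1)[rule_format, OF that] zero_less_one that] assms(2)
    by auto
  with f' Suc show ?thesis by auto
qed simp

lemma Ck_on_const: "Ck_on k S (\<lambda>t. c)"
  by (induction k arbitrary: c) (auto intro!: exI[of _ "\<lambda>t. 0"])

lemma Ck_on_add: "Ck_on k S f \<Longrightarrow> Ck_on k S g \<Longrightarrow> Ck_on k S (\<lambda>t. f t + g t)"
proof (induction k arbitrary: f g)
  case (Suc k)
  then obtain f' g' where "\<forall>t\<in>S. (f has_vector_derivative f' t) (at t within S)" "Ck_on k S f'"
    "\<forall>t\<in>S. (g has_vector_derivative g' t) (at t within S)" "Ck_on k S g'"
    by auto
  with Suc.IH[of f' g'] show ?case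
    by (auto intro!: exI[of _ "\<lambda>t. f' t + g' t"] has_vector_derivative_add)
qed simp

lemma Ck_on_scaleR:
  fixes a :: "real \<Rightarrow> real"
  shows "Ck_on k S a \<Longrightarrow> Ck_on k S f \<Longrightarrow> Ck_on k S (\<lambda>t. a t *\<^sub>R f t)"
proof (induction k arbitrary: a f)
  case (Suc k)
  then obtain a' f' where a': "\<forall>t\<in>S. (a has_vector_derivative a' t) (at t within S)" "Ck_on k S a'"
    and f': "\<forall>t\<in>S. (f has_vector_derivative f' t) (at t within S)" "Ck_on k S f'"
    by auto
  have "Ck_on k S a" "Ck_on k S f" using Suc.prems Ck_on_SucD by blast+
  with Suc.IH a' f' have ck: "Ck_on k S (\<lambda>t. a t *\<^sub>R f' t + a' t *\<^sub>R f t)"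
    by (intro Ck_on_add) auto
  have deriv: "((\<lambda>t. a t *\<^sub>R f t) has_vector_derivative a t *\<^sub>R f' t + a' t *\<^sub>R f t) (at t within S)"
    if "t \<in> S" for t
    using a' f' that
    by (auto intro!: has_vector_derivative_scaleR simp: has_real_derivative_iff_has_vector_derivative)
  show ?case by (rule Ck_on_SucI[OF deriv ck])
qed simp

lemma Ck_on_inner:
  fixes f g :: "real \<Rightarrow> 'a::real_inner"
  shows "Ck_on k S f \<Longrightarrow> Ck_on k S g \<Longrightarrow> Ck_on k S (\<lambda>t. inner (f t) (g t))"
proof (induction k arbitrary: f g)
  case (Suc k)
  then obtain f' g' where f': "\<forall>t\<in>S. (f has_vector_derivative f' t) (at t within S)" "Ck_on k S f'"
    and g': "\<forall>t\<in>S. (g has_vector_derivative g' t) (at t within S)" "Ck_on k S g'"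
    by auto
  have "Ck_on k S f" "Ck_on k S g" using Suc.prems Ck_on_SucD by blast+
  with Suc.IH f' g' have ck: "Ck_on k S (\<lambda>t. inner (f t) (g' t) + inner (f' t) (g t))"
    by (intro Ck_on_add) auto
  have deriv: "((\<lambda>t. inner (f t) (g t)) has_vector_derivative inner (f t) (g' t) + inner (f' t) (g t))
      (at t within S)" if "t \<in> S" for t
    using f'(1) g'(1) that by (intro bounded_bilinear.has_vector_derivative[OF bounded_bilinear_inner]) auto
  show ?case by (rule Ck_on_SucI[OF deriv ck])
qed simp

lemma Ck_on_diff: "Ck_on k S f \<Longrightarrow> Ck_on k S g \<Longrightarrow> Ck_on k S (\<lambda>t. f t - g t)"
  using Ck_on_add[of k S f "\<lambda>t. (-1) *\<^sub>R g t"] Ck_on_scaleR[OF Ck_on_const, of k S g "-1"] by simp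

lemma Ck_on_sum:
  "finite I \<Longrightarrow> (\<And>i. i \<in> I \<Longrightarrow> Ck_on k S (f i)) \<Longrightarrow> Ck_on k S (\<lambda>t. \<Sum>i\<in>I. f i t)"
  by (induction I rule: finite_induct) (auto intro: Ck_on_const Ck_on_add)

lemma Ck_on_compose:
  fixes q :: "real \<Rightarrow> real"
  assumes "open U" "C_inf_on U q" "Ck_on k S r" "\<And>t. t \<in> S \<Longrightarrow> r t \<in> U"
  shows "Ck_on k S (\<lambda>t. q (r t))"
proof -
  obtain D where D0: "D 0 = q"
    and DU: "\<And>k s. s \<in> U \<Longrightarrow> (D k has_vector_derivative D (Suc k) s) (at s within U)"
    using assms(2) unfolding C_inf_on_def by blast
  have D: "\<forall>k. \<forall>s\<in>U. (D k has_real_derivative D (Suc k) s) (at s)"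
    using DU at_within_open[OF _ assms(1)] by (simp add: has_real_derivative_iff_has_vector_derivative)
  have chain: "Ck_on k S (\<lambda>t. D 0 (r t))" if "\<forall>k. \<forall>s\<in>U. (D k has_real_derivative D (Suc k) s) (at s)"
    for D using assms(3) that
  proof (induction k arbitrary: D)
    case (Suc k D)
    then obtain r' where r': "\<forall>t\<in>S. (r has_vector_derivative r' t) (at t within S)" "Ck_on k S r'"
      by auto
    have "Ck_on k S r" using Suc.prems(1) by (rule Ck_on_SucD)
    then have "Ck_on k S (\<lambda>t. D 1 (r t))"
      using Suc.IH[of "\<lambda>j. D (Suc j)"] Suc.prems(2) by simp
    then have ck: "Ck_on k S (\<lambda>t. D 1 (r t) *\<^sub>R r' t)"
      using r'(2) by (rule Ck_on_scaleR)
    have deriv: "((\<lambda>t. D 0 (r t)) has_vector_derivative D 1 (r t) *\<^sub>R r' t) (at t within S)"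
      if "t \<in> S" for t
    proof -
      have "((\<lambda>t. D 0 (r t)) has_real_derivative D 1 (r t) * r' t) (at t within S)"
        using Suc.prems(2) r'(1) assms(4)[OF that] that
        by (intro DERIV_chain2[where f="D 0" and g=r and Da="D 1 (r t)"])
          (auto simp: has_real_derivative_iff_has_vector_derivative)
      then show ?thesis by (simp add: has_real_derivative_iff_has_vector_derivative)
    qed
    show ?case by (rule Ck_on_SucI[OF deriv ck])
  qed simp
  show ?thesis using chain[OF D] D0 by simp
qed

lemma C_inf_on_powr: "C_inf_on {0<..} (\<lambda>s. s powr a)"
  unfolding C_inf_on_def
proof (intro exI conjI ballI allI)
  let ?D = "\<lambda>k s. (\<Prod>j<k. a - real j) * s powr (a - real k)"
  show "?D 0 = (\<lambda>s. s powr a)" by simp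
  fix k and s :: real assume "s \<in> {0<..}"
  then have "(?D k has_real_derivative (\<Prod>j<k. a - real j) * ((a - real k) * s powr (a - real k - 1))) (at s)"
    by (intro DERIV_cmult has_real_derivative_powr) auto
  then show "(?D k has_vector_derivative ?D (Suc k) s) (at s within {0<..})"
    by (auto simp: has_real_derivative_iff_has_vector_derivative algebra_simps diff_diff_eq
        intro: has_vector_derivative_at_within)
qed

lemma Ck_on_norm:
  fixes f :: "real \<Rightarrow> 'a::real_inner"
  assumes "Ck_on k S f" "\<And>t. t \<in> S \<Longrightarrow> f t \<noteq> 0"
  shows "Ck_on k S (\<lambda>t. norm (f t))"
proof -
  have "Ck_on k S (\<lambda>t. (inner (f t) (f t)) powr (1/2))"
    using assms by (intro Ck_on_compose[OF _ C_inf_on_powr] Ck_on_inner) auto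
  then show ?thesis
    by (rule Ck_on_cong) (simp add: powr_half_sqrt norm_eq_sqrt_inner)
qed

lemma C_inf_on_if_Ck_on:
  fixes f :: "real \<Rightarrow> 'a::real_normed_vector"
  assumes nontrivial: "\<And>t. t \<in> S \<Longrightarrow> at t within S \<noteq> bot" and Ck: "\<And>k. Ck_on k S f"
  shows "C_inf_on S f"
proof -
  define smooth :: "(real \<Rightarrow> 'a) \<Rightarrow> bool" where "smooth g \<longleftrightarrow> (\<forall>k. Ck_on k S g)" for g
  have step: "\<exists>g'. (\<forall>t\<in>S. (g has_vector_derivative g' t) (at t within S)) \<and> smooth g'"
    if "smooth g" for g
  proof -
    have "Ck_on (Suc 0) S g" using that unfolding smooth_def by blast
    then obtain g' where g': "\<forall>t\<in>S. (g has_vector_derivative g' t) (at t within S)"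
      by auto
    have "Ck_on k S g'" for k
    proof -
      have "Ck_on (Suc k) S g" using that unfolding smooth_def by blast
      then obtain h where h: "\<forall>t\<in>S. (g has_vector_derivative h t) (at t within S)" "Ck_on k S h"
        by auto
      \<comment> \<open>each \<open>Ck_on (Suc k)\<close> has its own derivative witness; as \<open>S\<close> has no
        isolated points, they all agree with \<open>g'\<close>\<close>
      show ?thesis
        using h g' nontrivial by (intro Ck_on_cong[OF h(2)]) (blast intro: vector_derivative_unique_within)
    qed
    with g' show ?thesis unfolding smooth_def by blast
  qed
  define deriv where
    "deriv g = (SOME g'. (\<forall>t\<in>S. (g has_vector_derivative g' t) (at t within S)) \<and> smooth g')" for g
  have deriv: "(\<forall>t\<in>S. (g has_vector_derivative deriv g t) (at t within S)) \<and> smooth (deriv g)"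
    if "smooth g" for g
    unfolding deriv_def by (rule someI_ex[OF step[OF that]])
  have smooth_iter: "smooth ((deriv ^^ k) f)" for k
  proof (induction k)
    case 0 show ?case using Ck by (simp add: smooth_def)
  next
    case (Suc k) then show ?case using deriv by simp
  qed
  show ?thesis
    unfolding C_inf_on_def by (rule exI[of _ "\<lambda>k. (deriv ^^ k) f"]) (simp add: deriv smooth_iter)
qed

lemma antimono_on_if_has_real_derivative_nonpos:
  fixes f :: "real \<Rightarrow> real"
  assumes "\<And>t. t \<in> {a..b} \<Longrightarrow> (f has_real_derivative f' t) (at t within {a..b})"
    and "\<And>t. t \<in> {a..b} \<Longrightarrow> f' t \<le> 0"
    and "a \<le> c" "c \<le> d" "d \<le> b"
  shows "f d \<le> f c"
proof -
  have "\<exists>y\<in>{c..d}. f d - f c = f' y * (d - c)"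
  proof (rule mvt_very_simple[of c d f "\<lambda>y h. f' y * h", OF \<open>c \<le> d\<close>])
    fix y assume "c \<le> y" "y \<le> d"
    then have "(f has_real_derivative f' y) (at y within {a..b})" using assms by auto
    then have "(f has_real_derivative f' y) (at y within {c..d})"
      by (rule has_field_derivative_subset) (use assms in auto)
    then show "(f has_derivative (\<lambda>h. f' y * h)) (at y within {c..d})"
      by (simp add: has_field_derivative_def)
  qed
  then obtain y where "y \<in> {c..d}" "f d - f c = f' y * (d - c)" by auto
  moreover have "f' y \<le> 0" using assms \<open>y \<in> {c..d}\<close> by auto
  ultimately show ?thesis using \<open>c \<le> d\<close> mult_nonpos_nonneg[of "f' y" "d - c"] by simp
qed

lemma gronwall_vanishing:
  fixes u :: "real \<Rightarrow> real"
  assumes deriv: "\<And>s. s \<in> {a..b} \<Longrightarrow> (u has_real_derivative u' s) (at s within {a..b})"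
    and growth: "\<And>s. s \<in> {a..b} \<Longrightarrow> u' s \<le> C * u s"
    and "a \<le> t" "t \<le> s" "s \<le> b" "u t = 0"
  shows "u s \<le> 0"
proof -
  define w where "w = (\<lambda>s. u s * exp (- C * s))"
  have "(w has_real_derivative (u' r - C * u r) * exp (- C * r)) (at r within {a..b})"
    if "r \<in> {a..b}" for r
  proof -
    have "(w has_real_derivative u' r * exp (- C * r) + u r * (exp (- C * r) * - C))
        (at r within {a..b})"
      unfolding w_def using deriv[OF that] by (intro DERIV_mult DERIV_fun_exp derivative_eq_intros) auto
    then show ?thesis by (simp add: algebra_simps)
  qed
  moreover have "(u' r - C * u r) * exp (- C * r) \<le> 0" if "r \<in> {a..b}" for r
    using growth[OF that] by (intro mult_nonpos_nonneg) auto
  ultimately have "w s \<le> w t"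
    using assms(3-5) by (intro antimono_on_if_has_real_derivative_nonpos[of a b w]) auto
  with \<open>u t = 0\<close> show ?thesis by (simp add: w_def mult_le_0_iff)
qed

lemma lipschitz_on_Icc_if_C_inf_on:
  fixes f :: "real \<Rightarrow> real"
  assumes "open U" "C_inf_on U f" "{a..b} \<subseteq> U"
  shows "\<exists>L. L-lipschitz_on {a..b} f"
proof -
  obtain D where D0: "D 0 = f" and D: "\<And>k s. s \<in> U \<Longrightarrow> (D k has_vector_derivative D (Suc k) s) (at s)"
    using assms(1,2) unfolding C_inf_on_def by (metis at_within_open)
  have "continuous_on {a..b} (D 1)"
  proof (rule continuous_on_vector_derivative)
    fix s assume "s \<in> {a..b}"
    with assms(3) have "(D 1 has_vector_derivative D (Suc 1) s) (at s)" by (intro D) blast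
    then show "(D 1 has_vector_derivative D 2 s) (at s within {a..b})"
      by (simp add: numeral_2_eq_2 has_vector_derivative_at_within)
  qed
  then have "bounded (D 1 ` {a..b})"
    by (intro compact_imp_bounded compact_continuous_image) auto
  then obtain B where B: "\<forall>s\<in>{a..b}. norm (D 1 s) \<le> B"
    unfolding bounded_iff by blast
  have "(max B 0)-lipschitz_on {a..b} f"
  proof (rule bounded_derivative_imp_lipschitz)
    fix s assume s: "s \<in> {a..b}"
    have "(f has_vector_derivative D 1 s) (at s)" using D[of s 0] D0 assms(3) s by (simp add: subset_iff)
    then show "(f has_derivative (\<lambda>h. h *\<^sub>R D 1 s)) (at s within {a..b})"
      by (auto simp: has_vector_derivative_def intro: has_derivative_at_withinI)
    have "norm (D 1 s) \<le> max B 0" using B s by (auto simp: le_max_iff_disj)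
    then show "onorm (\<lambda>h. h *\<^sub>R D 1 s) \<le> max B 0"
      by (intro onorm_bound) (simp_all add: abs_mult, metis abs_ge_zero mult.commute mult_left_mono)
  qed auto
  then show ?thesis ..
qed

lemma sum_antisym_eq_0:
  fixes g :: "'a \<Rightarrow> 'a \<Rightarrow> 'b::real_vector"
  assumes "\<And>i k. g k i = - g i k"
  shows "(\<Sum>i\<in>A. \<Sum>k\<in>A. g i k) = 0"
proof -
  have "(\<Sum>i\<in>A. \<Sum>k\<in>A. g i k) = (\<Sum>k\<in>A. \<Sum>i\<in>A. g i k)"
    by (rule sum.swap)
  also have "\<dots> = (\<Sum>k\<in>A. \<Sum>i\<in>A. - g k i)"
    by (intro sum.cong refl assms)
  finally have "(\<Sum>i\<in>A. \<Sum>k\<in>A. g i k) + (\<Sum>i\<in>A. \<Sum>k\<in>A. g i k) = 0"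
    by (simp add: sum_negf eq_neg_iff_add_eq_0)
  then show ?thesis by (metis scaleR_2 scaleR_eq_0_iff zero_neq_numeral)
qed

lemma sum_sym_nonpos:
  fixes h :: "'a \<Rightarrow> 'a \<Rightarrow> real"
  assumes "\<And>i k. h i k + h k i \<le> 0"
  shows "(\<Sum>i\<in>A. \<Sum>k\<in>A. h i k) \<le> 0"
proof -
  have "(\<Sum>i\<in>A. \<Sum>k\<in>A. h i k) = (\<Sum>i\<in>A. \<Sum>k\<in>A. h k i)"
    by (rule sum.swap)
  then have "2 * (\<Sum>i\<in>A. \<Sum>k\<in>A. h i k) = (\<Sum>i\<in>A. \<Sum>k\<in>A. h i k + h k i)"
    by (simp add: sum.distrib)
  also have "\<dots> \<le> 0" by (intro sum_nonpos assms)
  finally show ?thesis by simp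
qed

context
  fixes \<alpha> :: real and n :: nat and p :: "real \<Rightarrow> real"
  assumes \<alpha>: "0 < \<alpha>" and n: "n \<ge> 2" and trunc: "psi_trunc \<alpha> n p"
begin

lemma psi_trunc_nonneg: "s \<ge> 0 \<Longrightarrow> p s \<ge> 0"
  using trunc unfolding psi_trunc_def by auto

lemma psi_trunc_le: "s \<ge> 0 \<Longrightarrow> p s \<le> real n"
proof -
  assume "s \<ge> 0"
  define a where "a = real n powr (-1/\<alpha>)"
  define c where "c = real (n - 1) powr (-1/\<alpha>)"
  have "a > 0" using n by (simp add: a_def)
  have c: "c > 0" "c powr (-\<alpha>) = real (n - 1)"
    using n \<alpha> by (auto simp: c_def powr_powr)
  have plateau: "p r = real n" if "0 \<le> r" "r \<le> a" for r
    using trunc that unfolding psi_trunc_def a_def by auto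
  have tail: "p r \<le> real n" if "c \<le> r" for r
  proof -
    have "p r = psi \<alpha> r"
      using trunc that unfolding psi_trunc_def c_def by blast
    then have "p r = r powr (-\<alpha>)"
      using that c by (simp add: psi_def)
    also have "\<dots> \<le> c powr (-\<alpha>)" using \<alpha> c that by (intro powr_mono2') auto
    finally show ?thesis using c by simp
  qed
  have mono: "monotone_on {a..c} (\<le>) (\<le>) p \<or> monotone_on {a..c} (\<le>) (\<ge>) p"
    using trunc unfolding psi_trunc_def a_def c_def by blast
  consider "s \<le> a" | "c \<le> s" | "a \<le> s" "s \<le> c" by linarith
  then show "p s \<le> real n"
  proof cases
    case 3
    with mono have "p s \<le> p c \<or> p s \<le> p a"
      by (auto simp: monotone_on_def)
    then show ?thesis using 3 tail[of c] plateau[of a] \<open>a > 0\<close> by auto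
  qed (use plateau tail \<open>s \<ge> 0\<close> in auto)
qed

lemma psi_trunc_lipschitz: "\<exists>L. L-lipschitz_on {0..R} p"
proof -
  define a where "a = real n powr (-1/\<alpha>)"
  have "a > 0" using n by (simp add: a_def)
  have "0-lipschitz_on {0..a} p"
  proof (rule lipschitz_on_transform[OF lipschitz_on_constant[of _ "real n"]])
    fix s assume "s \<in> {0..a}"
    then show "p s = real n" using trunc unfolding psi_trunc_def a_def by auto
  qed
  moreover obtain L where "L-lipschitz_on {a..max R a} p"
  proof -
    have "C_inf_on {0<..} p" using trunc by (simp add: psi_trunc_def)
    moreover have "{a..max R a} \<subseteq> {0<..}" using \<open>a > 0\<close> by auto
    ultimately show thesis using lipschitz_on_Icc_if_C_inf_on[OF open_greaterThan] that by blast
  qed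
  ultimately have "(max 0 L)-lipschitz_on {0..max R a} (\<lambda>s. if s \<le> a then p s else p s)"
    by (rule lipschitz_on_concat_max) (rule refl)
  then have "(max 0 L)-lipschitz_on {0..max R a} p" by simp
  then have "(max 0 L)-lipschitz_on {0..R} p"
    by (rule lipschitz_on_subset) auto
  then show ?thesis ..
qed

end

lemma cross_terms_le_sum_squares:
  fixes a b P K :: real
  assumes "P \<ge> 0" "K \<ge> 0"
  shows "2 * (a * b) + 2 * (b * (P * a + K * b)) \<le> (1 + P + 2 * K) * (a\<^sup>2 + b\<^sup>2)"
proof -
  have ab: "2 * (a * b) \<le> a\<^sup>2 + b\<^sup>2" using sum_squares_bound[of a b] by simp
  have "P * (2 * (a * b)) \<le> P * (a\<^sup>2 + b\<^sup>2)" using ab assms(1) by (rule mult_left_mono)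
  moreover have "K * b\<^sup>2 \<le> K * (a\<^sup>2 + b\<^sup>2)" using assms(2) by (intro mult_left_mono) auto
  ultimately show ?thesis using ab by (simp add: algebra_simps power2_eq_square)
qed

locale cucker_smale =
  fixes N :: nat and p :: "real \<Rightarrow> real" and T :: real and x v :: "nat \<Rightarrow> real \<Rightarrow> real^'d"
  assumes solution: "CS_solution N p T x v" and T_pos: "T > 0" and N_pos: "N \<ge> 1"
    and weight_nonneg: "\<And>s. s \<ge> 0 \<Longrightarrow> p s \<ge> 0"
begin

definition force :: "nat \<Rightarrow> real \<Rightarrow> real^'d" where
  "force i t = (1 / real N) *\<^sub>R (\<Sum>k<N. p (norm (x i t - x k t)) *\<^sub>R (v k t - v i t))"

definition kinetic_energy :: "real \<Rightarrow> real" where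
  "kinetic_energy t = (\<Sum>i<N. v i t \<bullet> v i t)"

lemma position_derivative:
  "i < N \<Longrightarrow> t \<in> {0..T} \<Longrightarrow> (x i has_vector_derivative v i t) (at t within {0..T})"
  using solution unfolding CS_solution_def by auto

lemma velocity_derivative:
  "i < N \<Longrightarrow> t \<in> {0..T} \<Longrightarrow> (v i has_vector_derivative force i t) (at t within {0..T})"
  using solution unfolding CS_solution_def force_def by auto

lemma sum_force_eq_0: "(\<Sum>i<N. force i t) = 0"
proof -
  have "(\<Sum>i<N. \<Sum>k<N. p (norm (x i t - x k t)) *\<^sub>R (v k t - v i t)) = 0"
    by (rule sum_antisym_eq_0) (simp add: norm_minus_commute scaleR_diff_right)
  then show ?thesis by (simp add: force_def flip: scaleR_sum_right)
qed

lemma momentum_conserved: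
  assumes "t \<in> {0..T}"
  shows "(\<Sum>i<N. v i t) = (\<Sum>i<N. v i 0)"
proof -
  have "((\<lambda>s. \<Sum>i<N. v i s) has_derivative (\<lambda>h. 0)) (at s within {0..T})" if "s \<in> {0..T}" for s
  proof -
    have "((\<lambda>s. \<Sum>i<N. v i s) has_vector_derivative (\<Sum>i<N. force i s)) (at s within {0..T})"
      using velocity_derivative that by (intro has_vector_derivative_sum) auto
    then show ?thesis by (simp add: sum_force_eq_0 has_vector_derivative_def)
  qed
  then obtain c where "\<forall>s\<in>{0..T}. (\<Sum>i<N. v i s) = c"
    using has_derivative_zero_constant[OF convex_real_interval(5)] by blast
  with assms T_pos show ?thesis by auto
qed

lemma velocity_force_sum_nonpos: "(\<Sum>i<N. v i t \<bullet> force i t) \<le> 0"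
proof -
  define h where "h i k = p (norm (x i t - x k t)) * (v i t \<bullet> (v k t - v i t))" for i k
  have "(\<Sum>i<N. \<Sum>k<N. h i k) \<le> 0"
  proof (rule sum_sym_nonpos)
    fix i k
    have "h i k + h k i = - p (norm (x i t - x k t)) * ((v k t - v i t) \<bullet> (v k t - v i t))"
      unfolding h_def norm_minus_commute[of "x k t"]
      by (simp add: inner_diff_left inner_diff_right inner_commute[of "v k t" "v i t"] algebra_simps)
    also have "\<dots> \<le> 0" using weight_nonneg[of "norm (x i t - x k t)"] by simp
    finally show "h i k + h k i \<le> 0" .
  qed
  moreover have "(\<Sum>i<N. v i t \<bullet> force i t) = (1 / real N) * (\<Sum>i<N. \<Sum>k<N. h i k)"
    unfolding force_def h_def by (simp add: inner_sum_right sum_distrib_left)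
  ultimately show ?thesis by (simp add: divide_nonpos_nonneg)
qed

lemma kinetic_energy_antimono:
  assumes "0 \<le> a" "a \<le> b" "b \<le> T"
  shows "kinetic_energy b \<le> kinetic_energy a"
proof (rule antimono_on_if_has_real_derivative_nonpos[OF _ _ assms])
  fix t assume t: "t \<in> {0..T}"
  have "(kinetic_energy has_vector_derivative (\<Sum>i<N. v i t \<bullet> force i t + force i t \<bullet> v i t))
      (at t within {0..T})"
    unfolding kinetic_energy_def using velocity_derivative t
    by (intro has_vector_derivative_sum bounded_bilinear.has_vector_derivative[OF bounded_bilinear_inner]) auto
  then show "(kinetic_energy has_real_derivative 2 * (\<Sum>i<N. v i t \<bullet> force i t)) (at t within {0..T})"
    by (simp add: has_real_derivative_iff_has_vector_derivative inner_commute[of "force _ t"]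
        sum.distrib sum_distrib_left)
  show "2 * (\<Sum>i<N. v i t \<bullet> force i t) \<le> 0" using velocity_force_sum_nonpos[of t] by simp
qed

lemma velocity_le_sqrt_kinetic_energy:
  assumes "i < N" "t \<in> {0..T}"
  shows "norm (v i t) \<le> sqrt (kinetic_energy 0)"
proof -
  have "(norm (v i t))\<^sup>2 = v i t \<bullet> v i t" by (simp add: power2_norm_eq_inner)
  also have "\<dots> \<le> kinetic_energy t"
    unfolding kinetic_energy_def using assms(1) by (intro member_le_sum) auto
  also have "\<dots> \<le> kinetic_energy 0" using kinetic_energy_antimono[of 0 t] assms(2) by auto
  finally show ?thesis by (simp add: real_le_rsqrt)
qed

lemma force_bound:
  assumes "\<And>s. s \<ge> 0 \<Longrightarrow> p s \<le> K" "\<And>k. k < N \<Longrightarrow> norm (v k t) \<le> M" "i < N"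
  shows "norm (force i t) \<le> 2 * M * K"
proof -
  have "norm (p (norm (x i t - x k t)) *\<^sub>R (v k t - v i t)) \<le> K * (2 * M)" if "k < N" for k
  proof -
    have "norm (v k t - v i t) \<le> 2 * M"
      using norm_triangle_ineq4[of "v k t" "v i t"] assms(2)[of k] assms(2,3) that by fastforce
    moreover have "0 \<le> p (norm (x i t - x k t))" "p (norm (x i t - x k t)) \<le> K"
      using weight_nonneg assms(1) by auto
    ultimately show ?thesis by (simp add: mult_mono)
  qed
  then have "norm (\<Sum>k<N. p (norm (x i t - x k t)) *\<^sub>R (v k t - v i t)) \<le> (\<Sum>k<N. K * (2 * M))"
    by (intro order.trans[OF norm_sum sum_mono]) simp
  then show ?thesis unfolding force_def using N_pos by (simp add: field_simps)
qed

lemma acceleration_bound: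
  assumes "\<And>s. s \<ge> 0 \<Longrightarrow> p s \<le> K" "i < N" "t \<in> {0..T}"
  shows "norm (vector_derivative (v i) (at t within {0..T})) \<le> 2 * sqrt (kinetic_energy 0) * K"
proof -
  have "vector_derivative (v i) (at t within {0..T}) = force i t"
    by (rule vector_derivative_within_closed_interval[OF T_pos assms(3) velocity_derivative[OF assms(2,3)]])
  then show ?thesis
    using force_bound[OF assms(1) velocity_le_sqrt_kinetic_energy assms(2)] assms(3) by simp
qed

lemma flocking_persists:
  assumes t: "t \<in> {0..T}" and flocked: "\<And>i j. i < N \<Longrightarrow> j < N \<Longrightarrow> v i t = v j t"
    and s: "s \<in> {t..T}" and i: "i < N"
  shows "v i s = v i t"
proof -
  define w where "w = v 0 t"
  have vw: "v k t = w" if "k < N" for k unfolding w_def using flocked[of k 0] N_pos that by auto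
  have "(\<Sum>k<N. v k s) = (\<Sum>k<N. v k t)"
    using momentum_conserved[of s] momentum_conserved[OF t] s t by simp
  also have "\<dots> = (\<Sum>k<N. w)" by (simp add: vw)
  also have "\<dots> = real N *\<^sub>R w" by (simp only: sum_constant_scaleR card_lessThan)
  finally have momentum: "(\<Sum>k<N. v k s) = real N *\<^sub>R w" .
  have energy: "kinetic_energy s \<le> real N * (w \<bullet> w)"
    using kinetic_energy_antimono[of t s] s t by (simp add: kinetic_energy_def vw)
  \<comment> \<open>by momentum conservation the spread of the velocities around \<open>w\<close> equals the energy loss\<close>
  have square: "(v k s - w) \<bullet> (v k s - w) = v k s \<bullet> v k s - 2 * (v k s \<bullet> w) + w \<bullet> w" for k
    by (simp add: inner_diff_left inner_diff_right inner_commute[of w "v k s"])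
  have "(\<Sum>k<N. (v k s - w) \<bullet> (v k s - w)) = kinetic_energy s - 2 * ((\<Sum>k<N. v k s) \<bullet> w) + real N * (w \<bullet> w)"
    unfolding kinetic_energy_def square by (simp add: sum_subtractf inner_sum_left sum.distrib sum_distrib_left)
  also have "\<dots> \<le> 0" using energy momentum by simp
  finally have "(\<Sum>k<N. (v k s - w) \<bullet> (v k s - w)) \<le> 0" .
  moreover have "(v i s - w) \<bullet> (v i s - w) \<le> (\<Sum>k<N. (v k s - w) \<bullet> (v k s - w))"
    using i by (intro member_le_sum) auto
  ultimately have "(v i s - w) \<bullet> (v i s - w) = 0" using inner_ge_zero[of "v i s - w"] by linarith
  then show ?thesis using vw[OF i] by simp
qed

lemma positions_bounded: "\<exists>R. \<forall>i<N. \<forall>s\<in>{0..T}. norm (x i s) \<le> R"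
proof -
  have "continuous_on {0..T} (x i)" if "i < N" for i
    using position_derivative that by (intro continuous_on_vector_derivative) auto
  then have "compact (\<Union>i<N. x i ` {0..T})"
    by (intro compact_UN compact_continuous_image) auto
  then obtain R where "\<forall>y\<in>(\<Union>i<N. x i ` {0..T}). norm y \<le> R"
    using compact_imp_bounded bounded_iff by metis
  then show ?thesis by auto
qed

lemma force_diff_bound:
  assumes lipschitz: "L-lipschitz_on {0..2 * R} p" and bounded: "\<And>s. s \<ge> 0 \<Longrightarrow> p s \<le> K"
    and xR: "\<And>k. k < N \<Longrightarrow> norm (x k s) \<le> R" and vM: "\<And>k. k < N \<Longrightarrow> norm (v k s) \<le> M"
    and i: "i < N" and j: "j < N"
  shows "norm (force i s - force j s) \<le> 2 * M * L * norm (x i s - x j s) + K * norm (v i s - v j s)"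
proof -
  define a where "a = norm (x i s - x j s)"
  define b where "b = norm (v i s - v j s)"
  have L: "L \<ge> 0" using lipschitz by (rule lipschitz_on_nonneg)
  have summand: "norm (p (norm (x i s - x k s)) *\<^sub>R (v k s - v i s) - p (norm (x j s - x k s)) *\<^sub>R (v k s - v j s))
      \<le> 2 * M * L * a + K * b" if k: "k < N" for k
  proof -
    let ?pi = "p (norm (x i s - x k s))" and ?pj = "p (norm (x j s - x k s))"
    have split: "?pi *\<^sub>R (v k s - v i s) - ?pj *\<^sub>R (v k s - v j s)
        = (?pi - ?pj) *\<^sub>R (v k s - v i s) + ?pj *\<^sub>R (v j s - v i s)"
      by (simp add: scaleR_diff_left scaleR_diff_right)
    have "norm (x i s - x k s) \<le> 2 * R"
      using norm_triangle_ineq4[of "x i s" "x k s"] xR[OF i] xR[OF k] by linarith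
    moreover have "norm (x j s - x k s) \<le> 2 * R"
      using norm_triangle_ineq4[of "x j s" "x k s"] xR[OF j] xR[OF k] by linarith
    ultimately have "\<bar>?pi - ?pj\<bar> \<le> L * \<bar>norm (x i s - x k s) - norm (x j s - x k s)\<bar>"
      using lipschitz_on_normD[OF lipschitz] by (simp add: real_norm_def)
    also have "\<dots> \<le> L * a"
      using norm_triangle_ineq3[of "x i s - x k s" "x j s - x k s"] L unfolding a_def
      by (intro mult_left_mono) auto
    finally have "norm ((?pi - ?pj) *\<^sub>R (v k s - v i s)) \<le> L * a * (2 * M)"
      using norm_triangle_ineq4[of "v k s" "v i s"] vM[OF k] vM[OF i]
      by (simp add: mult_mono')
    moreover have "norm (?pj *\<^sub>R (v j s - v i s)) \<le> K * b"
      using weight_nonneg[of "norm (x j s - x k s)"] bounded[of "norm (x j s - x k s)"] unfolding b_def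
      by (simp add: norm_minus_commute mult_right_mono)
    ultimately show ?thesis unfolding split
      using norm_triangle_ineq[of "(?pi - ?pj) *\<^sub>R (v k s - v i s)" "?pj *\<^sub>R (v j s - v i s)"]
      by (simp add: algebra_simps)
  qed
  have "force i s - force j s = (1 / real N) *\<^sub>R
      (\<Sum>k<N. p (norm (x i s - x k s)) *\<^sub>R (v k s - v i s) - p (norm (x j s - x k s)) *\<^sub>R (v k s - v j s))"
    unfolding force_def by (simp add: sum_subtractf scaleR_diff_right)
  also have "norm \<dots> \<le> (1 / real N) * (\<Sum>k<N. 2 * M * L * a + K * b)"
  proof -
    have "norm (\<Sum>k<N. p (norm (x i s - x k s)) *\<^sub>R (v k s - v i s) - p (norm (x j s - x k s)) *\<^sub>R (v k s - v j s))
        \<le> (\<Sum>k<N. 2 * M * L * a + K * b)"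
      by (rule order.trans[OF norm_sum sum_mono]) (rule summand, simp)
    then show ?thesis unfolding norm_scaleR using N_pos by (intro mult_mono) auto
  qed
  also have "\<dots> = 2 * M * L * a + K * b" using N_pos by simp
  finally show ?thesis unfolding a_def b_def .
qed

lemma particles_stick:
  assumes bounded: "\<And>s. s \<ge> 0 \<Longrightarrow> p s \<le> K" and lipschitz: "\<And>R. \<exists>L. L-lipschitz_on {0..R} p"
    and i: "i < N" and j: "j < N" and t: "t \<in> {0..T}"
    and same_position: "x i t = x j t" and same_velocity: "v i t = v j t" and s: "s \<in> {t..T}"
  shows "x i s = x j s"
proof -
  obtain R where xR: "\<And>k r. k < N \<Longrightarrow> r \<in> {0..T} \<Longrightarrow> norm (x k r) \<le> R"
    using positions_bounded by blast
  obtain L where lip: "L-lipschitz_on {0..2 * R} p" using lipschitz by blast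
  define M where "M = sqrt (kinetic_energy 0)"
  have vM: "\<And>k r. k < N \<Longrightarrow> r \<in> {0..T} \<Longrightarrow> norm (v k r) \<le> M"
    unfolding M_def by (rule velocity_le_sqrt_kinetic_energy)
  have "M \<ge> 0" unfolding M_def kinetic_energy_def by (simp add: sum_nonneg)
  have "L \<ge> 0" "K \<ge> 0"
    using lipschitz_on_nonneg[OF lip] bounded[of 0] weight_nonneg[of 0] by auto
  define C where "C = 1 + 2 * M * L + 2 * K"
  define \<delta>x where "\<delta>x r = x i r - x j r" for r
  define \<delta>v where "\<delta>v r = v i r - v j r" for r
  define \<delta>F where "\<delta>F r = force i r - force j r" for r
  define u where "u r = \<delta>x r \<bullet> \<delta>x r + \<delta>v r \<bullet> \<delta>v r" for r
  define u' where "u' r = 2 * (\<delta>x r \<bullet> \<delta>v r) + 2 * (\<delta>v r \<bullet> \<delta>F r)" for r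
  have deriv: "(u has_real_derivative u' r) (at r within {0..T})" if "r \<in> {0..T}" for r
  proof -
    have "(u has_vector_derivative (\<delta>x r \<bullet> \<delta>v r + \<delta>v r \<bullet> \<delta>x r) + (\<delta>v r \<bullet> \<delta>F r + \<delta>F r \<bullet> \<delta>v r))
        (at r within {0..T})"
      unfolding u_def[abs_def] \<delta>x_def[abs_def] \<delta>v_def[abs_def] \<delta>F_def
      by (intro has_vector_derivative_add bounded_bilinear.has_vector_derivative[OF bounded_bilinear_inner]
          has_vector_derivative_diff position_derivative velocity_derivative i j that)
    then show ?thesis
      by (simp add: has_real_derivative_iff_has_vector_derivative u'_def inner_commute)
  qed
  \<comment> \<open>the force difference is Lipschitz in the relative state\<close>
  have growth: "u' r \<le> C * u r" if "r \<in> {0..T}" for r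
  proof -
    have "norm (\<delta>F r) \<le> 2 * M * L * norm (\<delta>x r) + K * norm (\<delta>v r)"
      unfolding \<delta>F_def \<delta>x_def \<delta>v_def using that xR vM
      by (intro force_diff_bound[OF lip bounded _ _ i j]) auto
    then have "\<delta>v r \<bullet> \<delta>F r \<le> norm (\<delta>v r) * (2 * M * L * norm (\<delta>x r) + K * norm (\<delta>v r))"
      using norm_cauchy_schwarz[of "\<delta>v r" "\<delta>F r"] by (meson mult_left_mono norm_ge_zero order.trans)
    moreover have "\<delta>x r \<bullet> \<delta>v r \<le> norm (\<delta>x r) * norm (\<delta>v r)" by (rule norm_cauchy_schwarz)
    ultimately have "u' r \<le> 2 * (norm (\<delta>x r) * norm (\<delta>v r))
        + 2 * (norm (\<delta>v r) * (2 * M * L * norm (\<delta>x r) + K * norm (\<delta>v r)))"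
      unfolding u'_def by linarith
    also have "\<dots> \<le> C * ((norm (\<delta>x r))\<^sup>2 + (norm (\<delta>v r))\<^sup>2)"
      unfolding C_def using \<open>M \<ge> 0\<close> \<open>L \<ge> 0\<close> \<open>K \<ge> 0\<close>
      by (intro cross_terms_le_sum_squares) auto
    finally show ?thesis by (simp add: u_def power2_norm_eq_inner)
  qed
  have "u s \<le> 0"
    by (rule gronwall_vanishing[OF deriv growth]) (use t s same_position same_velocity in \<open>auto simp: u_def \<delta>x_def \<delta>v_def\<close>)
  then have "\<delta>x s \<bullet> \<delta>x s = 0"
    unfolding u_def using inner_ge_zero[of "\<delta>x s"] inner_ge_zero[of "\<delta>v s"] by linarith
  then show ?thesis by (simp add: \<delta>x_def)
qed

lemma Ck_on_force:
  assumes smooth: "C_inf_on {0<..} p"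
    and separated: "\<And>r i j. r \<in> S \<Longrightarrow> i < N \<Longrightarrow> j < N \<Longrightarrow> i \<noteq> j \<Longrightarrow> x i r \<noteq> x j r"
    and Ck: "\<And>j. j < N \<Longrightarrow> Ck_on k S (x j) \<and> Ck_on k S (v j)" and i: "i < N"
  shows "Ck_on k S (force i)"
proof -
  have "Ck_on k S (\<lambda>t. p (norm (x i t - x j t)) *\<^sub>R (v j t - v i t))" if j: "j < N" for j
  proof (cases "j = i")
    case True
    then show ?thesis using Ck_on_const[of k S 0] by simp
  next
    case False
    have "Ck_on k S (\<lambda>t. norm (x i t - x j t))"
      using Ck separated False i j by (intro Ck_on_norm Ck_on_diff) auto
    then have "Ck_on k S (\<lambda>t. p (norm (x i t - x j t)))"
      using separated False i j by (intro Ck_on_compose[OF open_greaterThan smooth]) auto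
    then show ?thesis using Ck i j by (intro Ck_on_scaleR Ck_on_diff) auto
  qed
  then have "Ck_on k S (\<lambda>t. (1 / real N) *\<^sub>R (\<Sum>j<N. p (norm (x i t - x j t)) *\<^sub>R (v j t - v i t)))"
    by (intro Ck_on_scaleR[OF Ck_on_const] Ck_on_sum) auto
  then show ?thesis by (simp add: force_def[abs_def])
qed

lemma Ck_on_solution:
  assumes smooth: "C_inf_on {0<..} p" and S: "S \<subseteq> {0..T}"
    and separated: "\<And>r i j. r \<in> S \<Longrightarrow> i < N \<Longrightarrow> j < N \<Longrightarrow> i \<noteq> j \<Longrightarrow> x i r \<noteq> x j r"
  shows "i < N \<Longrightarrow> Ck_on k S (x i) \<and> Ck_on k S (v i)"
proof (induction k arbitrary: i)
  case (Suc k)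
  have dx: "(x i has_vector_derivative v i t) (at t within S)" if "t \<in> S" for t
    using position_derivative[OF Suc.prems] S that by (blast intro: has_vector_derivative_within_subset)
  have dv: "(v i has_vector_derivative force i t) (at t within S)" if "t \<in> S" for t
    using velocity_derivative[OF Suc.prems] S that by (blast intro: has_vector_derivative_within_subset)
  have "Ck_on k S (force i)" by (rule Ck_on_force[OF smooth separated Suc.IH Suc.prems])
  then show ?case using Ck_on_SucI[OF dx] Ck_on_SucI[OF dv] Suc.IH[OF Suc.prems] by blast
qed simp

lemma C_inf_on_near_collision_free_time:
  assumes smooth: "C_inf_on {0<..} p" and t: "t \<in> {0..T}"
    and separated: "\<And>i j. i < N \<Longrightarrow> j < N \<Longrightarrow> i \<noteq> j \<Longrightarrow> x i t \<noteq> x j t"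
  shows "\<exists>e>0. \<forall>i<N. C_inf_on ({t - e .. t + e} \<inter> {0..T}) (x i)"
proof -
  define pairs where "pairs = {(i, j). i < N \<and> j < N \<and> i \<noteq> j}"
  have "finite pairs" unfolding pairs_def by (rule finite_subset[of _ "{..<N} \<times> {..<N}"]) auto
  moreover have "\<forall>ij\<in>pairs. eventually (\<lambda>r. x (fst ij) r \<noteq> x (snd ij) r) (at t within {0..T})"
  proof
    fix ij assume "ij \<in> pairs"
    then obtain i j where ij: "ij = (i, j)" "i < N" "j < N" "i \<noteq> j" unfolding pairs_def by auto
    have "continuous (at t within {0..T}) (x i)" "continuous (at t within {0..T}) (x j)"
      using position_derivative[OF ij(2) t] position_derivative[OF ij(3) t]
      by (auto intro: has_vector_derivative_continuous)
    then have "((\<lambda>r. norm (x i r - x j r)) \<longlongrightarrow> norm (x i t - x j t)) (at t within {0..T})"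
      by (intro tendsto_intros) (auto simp: continuous_within)
    then have "eventually (\<lambda>r. norm (x i r - x j r) > 0) (at t within {0..T})"
      by (rule order_tendstoD(1)) (use separated ij in auto)
    then show "eventually (\<lambda>r. x (fst ij) r \<noteq> x (snd ij) r) (at t within {0..T})"
      using ij by (auto elim: eventually_mono)
  qed
  ultimately have "eventually (\<lambda>r. \<forall>ij\<in>pairs. x (fst ij) r \<noteq> x (snd ij) r) (at t within {0..T})"
    by (rule eventually_ball_finite)
  then obtain d where d: "d > 0" "\<And>r. r \<in> {0..T} \<Longrightarrow> r \<noteq> t \<Longrightarrow> dist r t < d \<Longrightarrow>
      \<forall>ij\<in>pairs. x (fst ij) r \<noteq> x (snd ij) r"
    unfolding eventually_at by blast
  define S where "S = {t - d/2 .. t + d/2} \<inter> {0..T}"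
  have S_sub: "S \<subseteq> {0..T}" unfolding S_def by auto
  have separated_S: "x i r \<noteq> x j r" if "r \<in> S" "i < N" "j < N" "i \<noteq> j" for r i j
  proof (cases "r = t")
    case False
    then have "dist r t < d" using that(1) d(1) unfolding S_def dist_real_def by auto
    then show ?thesis using d(2)[of r] False that S_sub unfolding pairs_def by auto
  qed (use separated that in auto)
  have S_Icc: "S = {max (t - d/2) 0 .. min (t + d/2) T}" unfolding S_def by simp
  have "max (t - d/2) 0 < min (t + d/2) T" using t d(1) T_pos by auto
  then have "at r within S \<noteq> bot" if "r \<in> S" for r
    using islimpt_Icc that trivial_limit_within[of r S] unfolding S_Icc trivial_limit_def by auto
  then have "C_inf_on S (x i)" if "i < N" for i
    using Ck_on_solution[OF smooth S_sub separated_S that] by (intro C_inf_on_if_Ck_on) auto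
  then show ?thesis using d(1) unfolding S_def by (intro exI[of _ "d/2"]) auto
qed

lemma velocity_le_initial_bound:
  assumes "\<And>k. k < N \<Longrightarrow> norm (v k 0) \<le> B" "i < N" "t \<in> {0..T}"
  shows "norm (v i t) \<le> sqrt (real N * B\<^sup>2)"
proof -
  have "kinetic_energy 0 = (\<Sum>k<N. (norm (v k 0))\<^sup>2)"
    unfolding kinetic_energy_def by (simp add: power2_norm_eq_inner)
  also have "\<dots> \<le> (\<Sum>k<N. B\<^sup>2)" using assms(1) by (intro sum_mono power_mono) auto
  finally have "kinetic_energy 0 \<le> real N * B\<^sup>2" by simp
  then show ?thesis
    using velocity_le_sqrt_kinetic_energy[OF assms(2,3)] real_sqrt_le_mono order.trans by blast
qed

theorem regularity_and_invariants:
  assumes smooth: "C_inf_on {0<..} p" and bounded: "\<And>s. s \<ge> 0 \<Longrightarrow> p s \<le> K"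
    and lipschitz: "\<And>R. \<exists>L. L-lipschitz_on {0..R} p"
  shows
    "(\<forall>t\<in>{0..T}. (\<forall>i<N. \<forall>j<N. i \<noteq> j \<longrightarrow> norm (x i t - x j t) > 0) \<longrightarrow>
        (\<exists>e>0. \<forall>i<N. C_inf_on ({t - e .. t + e} \<inter> {0..T}) (x i))) \<and>
     (\<forall>t\<in>{0..T}. (1 / real N) *\<^sub>R (\<Sum>i<N. v i t) = (1 / real N) *\<^sub>R (\<Sum>i<N. v i 0)) \<and>
     (\<exists>M. (\<forall>i<N. \<forall>t\<in>{0..T}. norm (v i t) \<le> M) \<and>
          (\<forall>i<N. \<forall>t\<in>{0..T}. norm (vector_derivative (v i) (at t within {0..T})) \<le> 2 * M * K)) \<and>
     (\<forall>t\<in>{0..T}. \<forall>i<N. \<forall>j<N. x i t = x j t \<and> v i t = v j t \<longrightarrow> (\<forall>s\<in>{t..T}. x i s = x j s)) \<and>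
     (\<forall>t\<in>{0..T}. (\<forall>i<N. \<forall>j<N. v i t = v j t) \<longrightarrow> (\<forall>s\<in>{t..T}. \<forall>i<N. v i s = v i t))"
proof (intro conjI)
  show "\<forall>t\<in>{0..T}. (\<forall>i<N. \<forall>j<N. i \<noteq> j \<longrightarrow> norm (x i t - x j t) > 0) \<longrightarrow>
      (\<exists>e>0. \<forall>i<N. C_inf_on ({t - e .. t + e} \<inter> {0..T}) (x i))"
    by (intro ballI impI C_inf_on_near_collision_free_time[OF smooth]) auto
  show "\<exists>M. (\<forall>i<N. \<forall>t\<in>{0..T}. norm (v i t) \<le> M) \<and>
      (\<forall>i<N. \<forall>t\<in>{0..T}. norm (vector_derivative (v i) (at t within {0..T})) \<le> 2 * M * K)"
    by (intro exI[of _ "sqrt (kinetic_energy 0)"] conjI allI impI ballI)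
      (simp_all add: velocity_le_sqrt_kinetic_energy acceleration_bound[OF bounded])
  show "\<forall>t\<in>{0..T}. (1 / real N) *\<^sub>R (\<Sum>i<N. v i t) = (1 / real N) *\<^sub>R (\<Sum>i<N. v i 0)"
    using momentum_conserved by metis
  show "\<forall>t\<in>{0..T}. \<forall>i<N. \<forall>j<N. x i t = x j t \<and> v i t = v j t \<longrightarrow> (\<forall>s\<in>{t..T}. x i s = x j s)"
    using particles_stick[OF bounded lipschitz] by blast
  show "\<forall>t\<in>{0..T}. (\<forall>i<N. \<forall>j<N. v i t = v j t) \<longrightarrow> (\<forall>s\<in>{t..T}. \<forall>i<N. v i s = v i t)"
    using flocking_persists by blast
qed

end

theorem proposition2p2:
  fixes \<alpha> T :: real and N :: nat
    and \<psi>n :: "nat \<Rightarrow> real \<Rightarrow> real"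
    and x v :: "nat \<Rightarrow> nat \<Rightarrow> real \<Rightarrow> real^'d"
  assumes "0 < \<alpha>" "\<alpha> < 1" "N \<ge> 1" "T > 0"
    and "\<And>n. n \<ge> 2 \<Longrightarrow> psi_trunc \<alpha> n (\<psi>n n)"
    and "\<And>n. n \<ge> 2 \<Longrightarrow> CS_solution N (\<psi>n n) T (x n) (v n)"
  shows
    "(\<forall>n\<ge>2.
       \<comment> \<open>1. smoothness away from collisions\<close>
       (\<forall>t\<in>{0..T}. (\<forall>i<N. \<forall>j<N. i \<noteq> j \<longrightarrow> norm (x n i t - x n j t) > 0) \<longrightarrow>
          (\<exists>e>0. \<forall>i<N. C_inf_on ({t - e .. t + e} \<inter> {0..T}) (x n i))) \<and>
       \<comment> \<open>2. conservation of the average velocity\<close>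
       (\<forall>t\<in>{0..T}. (1 / real N) *\<^sub>R (\<Sum>i<N. v n i t) = (1 / real N) *\<^sub>R (\<Sum>i<N. v n i 0)) \<and>
       \<comment> \<open>3. and 5. velocity bound M(n) and acceleration bound 2 M(n) n\<close>
       (\<exists>M. (\<forall>i<N. \<forall>t\<in>{0..T}. norm (v n i t) \<le> M) \<and>
            (\<forall>i<N. \<forall>t\<in>{0..T}.
               norm (vector_derivative (v n i) (at t within {0..T})) \<le> 2 * M * real n)) \<and>
       \<comment> \<open>6. sticking of particles\<close>
       (\<forall>t\<in>{0..T}. \<forall>i<N. \<forall>j<N. x n i t = x n j t \<and> v n i t = v n j t \<longrightarrow>
          (\<forall>s\<in>{t..T}. x n i s = x n j s)) \<and>
       \<comment> \<open>7. flocked state persists\<close>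
       (\<forall>t\<in>{0..T}. (\<forall>i<N. \<forall>j<N. v n i t = v n j t) \<longrightarrow>
          (\<forall>s\<in>{t..T}. \<forall>i<N. v n i s = v n i t))) \<and>
     \<comment> \<open>4. uniform velocity bound under uniformly bounded initial data\<close>
     ((\<exists>B. \<forall>n\<ge>2. \<forall>i<N. norm (x n i 0) \<le> B \<and> norm (v n i 0) \<le> B) \<longrightarrow>
        (\<exists>M. \<forall>n\<ge>2. \<forall>i<N. \<forall>t\<in>{0..T}. norm (v n i t) \<le> M))"
proof -
  note \<alpha> = assms(1) and trunc = assms(5)
  have system: "cucker_smale N (\<psi>n n) T (x n) (v n)" if "n \<ge> 2" for n
    using assms(3,4) assms(6)[OF that] psi_trunc_nonneg[OF \<alpha> that trunc[OF that]] by unfold_locales auto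
  have smooth: "C_inf_on {0<..} (\<psi>n n)" if "n \<ge> 2" for n
    using trunc[OF that] by (simp add: psi_trunc_def)
  {
    fix n :: nat assume n: "n \<ge> 2"
    interpret cucker_smale N "\<psi>n n" T "x n" "v n" by (rule system[OF n])
    note regularity_and_invariants[OF smooth[OF n] psi_trunc_le[OF \<alpha> n trunc[OF n]]
        psi_trunc_lipschitz[OF \<alpha> n trunc[OF n]]]
  }
  note per_n = this
  have uniform: "\<exists>M. \<forall>n\<ge>2. \<forall>i<N. \<forall>t\<in>{0..T}. norm (v n i t) \<le> M"
    if "\<exists>B. \<forall>n\<ge>2. \<forall>i<N. norm (x n i 0) \<le> B \<and> norm (v n i 0) \<le> B"
    using cucker_smale.velocity_le_initial_bound[OF system] that by blast
  show ?thesis by (intro per_n conjI allI impI uniform) assumption+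
qed

end
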